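(* Let $\mathcal{G}_n(\mathcal{X},\mathcal{Y},d,Q)$ be a position-optimization game (as defined in the context) and let $\bm{x}$ be a pure strategy profile in which some player $i$ has $x_i\in\mathcal{X}^*$. Then $u_i(x_i,\bm{x}_{-i})\ge\frac{P(x_i)}{k_{\bm{x}}(x_i)}$, with equality if $\bm{x}$ covers $\mathcal{X}^*$. Moreover, for any $x'\in\mathcal{X}^*$ with $x'\neq x_i$, $u_i(x',\bm{x}_{-i})\ge\frac{P(x')}{k_{\bm{x}}(x')+1}$, with equality if $\bm{x}$ covers $\mathcal{X}^*$ and $k_{\bm{x}}(x_i)\ge 2$.
   Context: Position-optimization game: $\mathcal{X}$ is an arbitrary set of positions, $\mathcal{Y}$ an arbitrary set of targets, $d:\mathcal{X}\times\mathcal{Y}\to[0,\infty]$ a proximity function. For $y\in\mathcal{Y}$ let $x^*(y)=\arg\min_{x\in\mathcal{X}} d(x,y)$, and $\mathcal{X}^*=\bigcup_{y\in\mathcal{Y}}x^*(y)$ (pseudo-targets). $Q$ is a probability distribution on $\mathcal{Y}$ with $Q(\{y:|x^*(y)|>1\})=0$ and $|\mathcal{X}^*|<\infty$. For $x\in\mathcal{X}^*$ let $P(x)=Q(\{y: x^*(y)=\{x\}\})$. In the game $\mathcal{G}_n(\mathcal{X},\mathcal{Y},d,Q)$, players $i\in[n]$ choose positions $x_i\in\mathcal{X}$, $\bm{x}=(x_1,\dots,x_n)$; with $X_{\min}(\bm{x},y)=\arg\min_{x_i\in\bm{x}} d(x_i,y)$, player $i$'s utility is $u_i(x_i,\bm{x}_{-i})=\mathbb{E}_{y\sim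 Q}\big[\mathbb{1}[x_i\in X_{\min}(\bm{x},y)]/|X_{\min}(\bm{x},y)|\big]$; $u_i(x',\bm{x}_{-i})$ denotes the utility when player $i$ plays $x'$ instead and the others are unchanged. $k_{\bm{x}}(x)$ is the number of players at position $x$ in $\bm{x}$. A profile $\bm{x}$ covers $\mathcal{X}^*$ if $k_{\bm{x}}(x)\ge1$ for all $x\in\mathcal{X}^*$. *)

theory Defs
  imports "HOL-Probability.Probability"
begin

text \<open>Positions: type 'x (the set X); targets: type 'y (the set Y).
  Proximity d :: 'x => 'y => ennreal (values in [0,inf]).
  A profile of n players is xs :: nat => 'x restricted to players {..<n}.\<close>

definition xstar :: "('x \<Rightarrow> 'y \<Rightarrow> ennreal) \<Rightarrow> 'y \<Rightarrow> 'x set" where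
  "xstar d y = {x. \<forall>x'. d x y \<le> d x' y}"

definition Xstar :: "('x \<Rightarrow> 'y \<Rightarrow> ennreal) \<Rightarrow> 'x set" where
  "Xstar d = (\<Union>y. xstar d y)"

definition Pmass :: "('x \<Rightarrow> 'y \<Rightarrow> ennreal) \<Rightarrow> 'y measure \<Rightarrow> 'x \<Rightarrow> real" where
  "Pmass d Q x = measure Q {y \<in> space Q. xstar d y = {x}}"

definition Xmin :: "nat \<Rightarrow> ('x \<Rightarrow> 'y \<Rightarrow> ennreal) \<Rightarrow> (nat \<Rightarrow> 'x) \<Rightarrow> 'y \<Rightarrow> nat set" where
  "Xmin n d xs y = {j. j < n \<and> (\<forall>l<n. d (xs j) y \<le> d (xs l) y)}"

definition utility :: "nat \<Rightarrow> ('x \<Rightarrow> 'y \<Rightarrow> ennreal) \<Rightarrow> 'y measure \<Rightarrow> (nat \<Rightarrow> 'x) \<Rightarrow> nat \<Rightarrow> real" where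
  "utility n d Q xs i =
     (\<integral>y. (if i \<in> Xmin n d xs y then 1 / real (card (Xmin n d xs y)) else 0) \<partial>Q)"

definition kcount :: "nat \<Rightarrow> (nat \<Rightarrow> 'x) \<Rightarrow> 'x \<Rightarrow> nat" where
  "kcount n xs x = card {j. j < n \<and> xs j = x}"

definition covers :: "nat \<Rightarrow> ('x \<Rightarrow> 'y \<Rightarrow> ennreal) \<Rightarrow> (nat \<Rightarrow> 'x) \<Rightarrow> bool" where
  "covers n d xs \<longleftrightarrow> (\<forall>x\<in>Xstar d. kcount n xs x \<ge> 1)"

end

theory Submission
  imports Defs
begin

text \<open>Let \<open>A\<close> be the event that \<open>x\<^sub>i\<close> is the unique nearest pseudo-target of the target
  \<open>y\<close>. On \<open>A\<close> every position other than \<open>x\<^sub>i\<close> is strictly farther from \<open>y\<close>, so the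
  nearest players are exactly the \<open>k(x\<^sub>i)\<close> players standing at \<open>x\<^sub>i\<close> and player \<open>i\<close>
  receives \<open>1/k(x\<^sub>i)\<close>; integrating over \<open>A\<close> gives the lower bound. If the profile covers
  \<open>X*\<close>, then almost every target has a unique nearest pseudo-target and somebody stands
  there, strictly beating player \<open>i\<close> off \<open>A\<close>; so the share vanishes off \<open>A\<close> and the bound
  is an equality. A deviation of player \<open>i\<close> to \<open>x'\<close> is the same statement for the
  profile \<open>x(i := x')\<close>, which has \<open>k(x') + 1\<close> players at \<open>x'\<close> and still covers \<open>X*\<close> when
  another player stays behind at \<open>x\<^sub>i\<close>.\<close>

definition share :: "nat \<Rightarrow> ('x \<Rightarrow> 'y \<Rightarrow> ennreal) \<Rightarrow> (nat \<Rightarrow> 'x) \<Rightarrow> nat \<Rightarrow> 'y \<Rightarrow> real" where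
  "share n d xs i y = (if i \<in> Xmin n d xs y then 1 / real (card (Xmin n d xs y)) else 0)"

lemma utility_eq_integral_share: "utility n d Q xs i = (\<integral>y. share n d xs i y \<partial>Q)"
  by (simp add: utility_def share_def)

lemma finite_Xmin: "finite (Xmin n d xs y)"
  by (rule finite_subset[of _ "{..<n}"]) (auto simp: Xmin_def)

lemma share_nonneg: "0 \<le> share n d xs i y"
  by (simp add: share_def)

lemma share_le_1: "share n d xs i y \<le> 1"
proof (cases "i \<in> Xmin n d xs y")
  case True
  then have "0 < card (Xmin n d xs y)"
    using finite_Xmin[of n d xs y] by (auto simp: card_gt_0_iff)
  then show ?thesis by (simp add: share_def)
qed (simp add: share_def)

lemma borel_measurable_share:
  assumes "\<And>x. d x \<in> borel_measurable Q"
  shows "share n d xs i \<in> borel_measurable Q"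
proof -
  have "(\<lambda>y. Xmin n d xs y) \<in> measurable Q (count_space (Pow {..<n}))"
  proof (subst measurable_count_space_eq_countable)
    have "(\<lambda>y. Xmin n d xs y) -` {S} \<inter> space Q \<in> sets Q" for S
    proof -
      have "Measurable.pred Q (\<lambda>y. Xmin n d xs y = S)"
        unfolding Xmin_def set_eq_iff mem_Collect_eq using assms by measurable
      then show ?thesis by (simp add: pred_def vimage_def Int_def conj_commute)
    qed
    then show "(\<lambda>y. Xmin n d xs y) \<in> space Q \<rightarrow> Pow {..<n} \<and>
        (\<forall>S\<in>Pow {..<n}. (\<lambda>y. Xmin n d xs y) -` {S} \<inter> space Q \<in> sets Q)"
      by (auto simp: Xmin_def)
  qed (simp add: countable_finite)
  then show ?thesis
    unfolding share_def
    by (rule measurable_compose[where g = "\<lambda>S. if i \<in> S then 1 / real (card S) else 0"]) simp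
qed

lemma (in prob_space) integrable_share:
  assumes "\<And>x. d x \<in> borel_measurable M"
  shows "integrable M (share n d xs i)"
proof (rule integrable_const_bound[where B = 1])
  show "AE y in M. norm (share n d xs i y) \<le> 1"
    by (intro AE_I2) (simp add: abs_of_nonneg share_nonneg share_le_1)
qed (rule borel_measurable_share[OF assms])

lemma xstar_singleton_less:
  assumes "xstar d y = {z}" and "x \<noteq> z"
  shows "d z y < d x y"
proof -
  have "x \<notin> xstar d y" using assms by blast
  then obtain x' where "d x' y < d x y" by (auto simp: xstar_def not_le)
  moreover have "d z y \<le> d x' y" using assms(1) by (auto simp: xstar_def)
  ultimately show ?thesis by (simp add: order.strict_trans1)
qed

lemma Xmin_eq_players_at_xstar:
  assumes "xstar d y = {z}" and "\<exists>j<n. xs j = z"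
  shows "Xmin n d xs y = {j. j < n \<and> xs j = z}"
proof -
  obtain l where l: "l < n" "xs l = z" using assms(2) by blast
  have "d z y \<le> d x y" for x using assms(1) by (auto simp: xstar_def)
  with l xstar_singleton_less[OF assms(1)] show ?thesis
    unfolding Xmin_def by (auto simp: not_le[symmetric])
qed

lemma kcount_pos_iff: "0 < kcount n xs x \<longleftrightarrow> (\<exists>j<n. xs j = x)"
  by (auto simp: kcount_def card_gt_0_iff)

lemma covers_occupied:
  assumes "covers n d xs" and "x \<in> Xstar d"
  shows "\<exists>j<n. xs j = x"
  using assms by (auto simp: covers_def kcount_pos_iff[symmetric] Suc_le_eq)

lemma share_xstar_singleton:
  assumes "xstar d y = {z}" and "\<exists>j<n. xs j = z"
  shows "share n d xs i y = (if i < n \<and> xs i = z then 1 / real (kcount n xs z) else 0)"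
  using Xmin_eq_players_at_xstar[OF assms] by (simp add: share_def kcount_def)

lemma kcount_fun_upd_same:
  assumes "i < n" and "xs i \<noteq> x"
  shows "kcount n (xs(i := x)) x = kcount n xs x + 1"
proof -
  have "{j. j < n \<and> (xs(i := x)) j = x} = insert i {j. j < n \<and> xs j = x}"
    using assms by auto
  then show ?thesis using assms by (simp add: kcount_def)
qed

lemma covers_fun_upd:
  assumes cov: "covers n d xs" and two: "2 \<le> kcount n xs (xs i)" and "i < n"
  shows "covers n d (xs(i := x))"
  unfolding covers_def
proof (intro ballI)
  fix w assume w: "w \<in> Xstar d"
  have "\<exists>j<n. (xs(i := x)) j = w"
  proof (cases "w = x \<or> w = xs i")
    case True
    have "\<not> {j. j < n \<and> xs j = xs i} \<subseteq> {i}"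
      using two card_mono[of "{i}" "{j. j < n \<and> xs j = xs i}"] by (auto simp: kcount_def)
    with True \<open>i < n\<close> show ?thesis by auto
  next
    case False
    with covers_occupied[OF cov w] obtain j where "j < n" "xs j = w" by blast
    with False show ?thesis by (intro exI[of _ j]) auto
  qed
  then have "0 < kcount n (xs(i := x)) w" by (simp add: kcount_pos_iff)
  then show "1 \<le> kcount n (xs(i := x)) w" by simp
qed

lemma utility_ge_Pmass_div_kcount:
  fixes d :: "'x \<Rightarrow> 'y \<Rightarrow> ennreal"
  assumes "prob_space Q" and d_meas: "\<And>x. d x \<in> borel_measurable Q"
    and P_meas: "{y \<in> space Q. xstar d y = {xs i}} \<in> sets Q" and "i < n"
  shows "Pmass d Q (xs i) / real (kcount n xs (xs i)) \<le> utility n d Q xs i"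
proof -
  interpret prob_space Q by fact
  define A where "A = {y \<in> space Q. xstar d y = {xs i}}"
  define k where "k = real (kcount n xs (xs i))"
  have "Pmass d Q (xs i) / k = (\<integral>y. indicator A y / k \<partial>Q)"
    using P_meas by (simp add: Pmass_def A_def)
  also have "\<dots> \<le> (\<integral>y. share n d xs i y \<partial>Q)"
  proof (rule integral_mono)
    have occupied: "\<exists>j<n. xs j = xs i" using \<open>i < n\<close> by blast
    show "integrable Q (\<lambda>y. indicator A y / k)"
      using P_meas by (intro integrable_divide integrable_real_indicator)
        (auto simp: A_def less_top[symmetric])
    show "integrable Q (share n d xs i)"
      by (rule integrable_share[OF d_meas])
    show "indicator A y / k \<le> share n d xs i y" for y
      using share_xstar_singleton[of d y "xs i" n xs i] share_nonneg[of n d xs i y]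
        occupied \<open>i < n\<close>
      by (auto simp: A_def k_def indicator_def)
  qed
  finally show ?thesis by (simp add: k_def utility_eq_integral_share)
qed

lemma utility_eq_Pmass_div_kcount_if_covers:
  fixes d :: "'x \<Rightarrow> 'y \<Rightarrow> ennreal"
  assumes "prob_space Q" and d_meas: "\<And>x. d x \<in> borel_measurable Q"
    and P_meas: "{y \<in> space Q. xstar d y = {xs i}} \<in> sets Q"
    and nonempty: "\<And>y. xstar d y \<noteq> {}"
    and unique: "{y \<in> space Q. \<exists>a\<in>xstar d y. \<exists>b\<in>xstar d y. a \<noteq> b} \<in> null_sets Q"
    and cov: "covers n d xs" and "i < n"
  shows "utility n d Q xs i = Pmass d Q (xs i) / real (kcount n xs (xs i))"
proof -
  interpret prob_space Q by fact
  define A where "A = {y \<in> space Q. xstar d y = {xs i}}"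
  define k where "k = real (kcount n xs (xs i))"
  have ae: "AE y in Q. share n d xs i y = indicator A y / k"
    using AE_space AE_not_in[OF unique]
  proof eventually_elim
    case (elim y)
    then have "\<forall>a\<in>xstar d y. \<forall>b\<in>xstar d y. a = b" by blast
    then obtain w where w: "xstar d y = {w}"
      using nonempty[of y] by blast
    then have "w \<in> Xstar d" by (auto simp: Xstar_def)
    with cov have "\<exists>j<n. xs j = w" by (rule covers_occupied)
    from share_xstar_singleton[OF w this, of i] \<open>i < n\<close>
    have "share n d xs i y = (if xs i = w then 1 / k else 0)"
      by (cases "xs i = w") (simp_all add: k_def)
    moreover have "indicator A y = (if xs i = w then 1 else 0 :: real)"
      using elim(1) w by (auto simp: A_def)
    ultimately show ?case by simp
  qed
  have "(\<integral>y. share n d xs i y \<partial>Q) = (\<integral>y. indicator A y / k \<partial>Q)"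
    by (rule integral_cong_AE[OF borel_measurable_share[OF d_meas] _ ae])
      (use P_meas in \<open>simp add: A_def\<close>)
  also have "\<dots> = Pmass d Q (xs i) / k"
    using P_meas by (simp add: Pmass_def A_def)
  finally show ?thesis by (simp only: k_def utility_eq_integral_share)
qed

theorem lemma1:
  fixes d :: "'x \<Rightarrow> 'y \<Rightarrow> ennreal" and Q :: "'y measure"
    and n :: nat and xs :: "nat \<Rightarrow> 'x" and i :: nat
  assumes Q: "prob_space Q" and spaceQ: "space Q = UNIV"
    and d_meas: "\<And>x. d x \<in> borel_measurable Q"
    and nonempty: "\<And>y. xstar d y \<noteq> {}"
    and unique: "{y \<in> space Q. \<exists>a\<in>xstar d y. \<exists>b\<in>xstar d y. a \<noteq> b} \<in> null_sets Q"
    and P_meas: "\<And>x. x \<in> Xstar d \<Longrightarrow> {y \<in> space Q. xstar d y = {x}} \<in> sets Q"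
    and fin: "finite (Xstar d)"
    and i: "i < n" and xi: "xs i \<in> Xstar d"
  shows "utility n d Q xs i \<ge> Pmass d Q (xs i) / real (kcount n xs (xs i))
       \<and> (covers n d xs \<longrightarrow> utility n d Q xs i = Pmass d Q (xs i) / real (kcount n xs (xs i)))
       \<and> (\<forall>x'\<in>Xstar d. x' \<noteq> xs i \<longrightarrow>
            utility n d Q (xs(i := x')) i \<ge> Pmass d Q x' / real (kcount n xs x' + 1)
          \<and> (covers n d xs \<and> kcount n xs (xs i) \<ge> 2 \<longrightarrow>
             utility n d Q (xs(i := x')) i = Pmass d Q x' / real (kcount n xs x' + 1)))"
proof -
  have own_ge: "Pmass d Q (xs i) / real (kcount n xs (xs i)) \<le> utility n d Q xs i"
    by (rule utility_ge_Pmass_div_kcount[where xs = xs, OF Q d_meas P_meas[OF xi] i])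
  have own_eq: "covers n d xs \<longrightarrow>
      utility n d Q xs i = Pmass d Q (xs i) / real (kcount n xs (xs i))"
    using utility_eq_Pmass_div_kcount_if_covers[where xs = xs,
        OF Q d_meas P_meas[OF xi] nonempty unique _ i]
    by blast
  have deviation: "utility n d Q (xs(i := x')) i \<ge> Pmass d Q x' / real (kcount n xs x' + 1)
      \<and> (covers n d xs \<and> kcount n xs (xs i) \<ge> 2 \<longrightarrow>
         utility n d Q (xs(i := x')) i = Pmass d Q x' / real (kcount n xs x' + 1))"
    if x': "x' \<in> Xstar d" "x' \<noteq> xs i" for x'
  proof -
    have P': "{y \<in> space Q. xstar d y = {(xs(i := x')) i}} \<in> sets Q"
      using P_meas[OF x'(1)] by simp
    have k: "kcount n (xs(i := x')) x' = kcount n xs x' + 1"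
      using x'(2) by (intro kcount_fun_upd_same[where xs = xs, OF i]) simp
    show ?thesis
      using utility_ge_Pmass_div_kcount[where xs = "xs(i := x')", OF Q d_meas P' i]
        utility_eq_Pmass_div_kcount_if_covers[where xs = "xs(i := x')",
          OF Q d_meas P' nonempty unique covers_fun_upd[OF _ _ i] i]
      by (simp add: k)
  qed
  show ?thesis using own_ge own_eq deviation by blast
qed

end
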